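(* In the qubit–battery model with the "copy" interaction $U_{SB}$, let the battery be in the coherent state $|\alpha\rangle_B=e^{-\alpha^2/2}\sum_{n\ge0}\frac{\alpha^n}{\sqrt{n!}}|n\rangle_B$ with $\alpha>0$, whose mean energy is $\langle E\rangle=\omega\alpha^2$. Then, as $\alpha\to\infty$, $$\epsilon_C(\mathbf\Phi_{|\alpha\rangle},\mathcal V)=\frac{|V_{01}|^2}{4\alpha^2}+o(\alpha^{-2})=\frac{\omega|V_{01}|^2}{4\langle E\rangle}+o\big(\langle E\rangle^{-1}\big).$$
   Context: Qubit $S$ with $H_S=\frac\omega2(|1\rangle\langle1|-|0\rangle\langle0|)$; battery $B$ with basis $\{|n\rangle\}_{n\ge0}$ and $H_B=\omega\sum_n n|n\rangle\langle n|$. $V_S$ a qubit unitary, $V_{ij}=\langle i|V_S|j\rangle$, $\mathcal V(\cdot)=V_S\cdot V_S^\dagger$. "Copy" interaction: $U_{SB}=|0\rangle\langle0|_S\otimes|0\rangle\langle0|_B+\sum_{n\ge1}\sum_{i,j\in\{0,1\}}V_{ij}|i\rangle\langle j|_S\otimes|n-i\rangle\langle n-j|_B$. Channel $\mathbf\Phi_{|\beta\rangle}(\rho)=\mathrm{Tr}_B[U_{SB}(\rho\otimes|\beta\rangle\langle\beta|)U_{SB}^\dagger]$ with Kraus operators $K^{(n)}={}_B\langle n|U_{SB}|\beta\rangle$; Choi infidelity $\epsilon_C=1-\frac14\sum_n|\mathrm{Tr}[V_S^\dagger K^{(n)}]|^2$. *)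

theory Defs
  imports "HOL-Analysis.Analysis" "HOL-Library.Landau_Symbols"
begin

text \<open>Qubit operators are 2x2 complex matrices given by their entries
  V i j = <i|V|j>, with i, j in {0,1}.\<close>

definition qubit_unitary :: "(nat \<Rightarrow> nat \<Rightarrow> complex) \<Rightarrow> bool" where
  "qubit_unitary V \<longleftrightarrow>
     (\<forall>i<2. \<forall>k<2. (\<Sum>j<2. cnj (V j i) * V j k) = (if i = k then 1 else 0)) \<and>
     (\<forall>i<2. \<forall>k<2. (\<Sum>j<2. V i j * cnj (V k j)) = (if i = k then 1 else 0))"

text \<open>Matrix element <i|_S <n'|_B U_SB |j>_S |m>_B of the copy interaction
  U_SB = |0><0| (x) |0><0| + sum_{N>=1} sum_{i,j} V_ij |i><j| (x) |N-i><N-j|.\<close>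

definition copy_U :: "(nat \<Rightarrow> nat \<Rightarrow> complex) \<Rightarrow> nat \<Rightarrow> nat \<Rightarrow> nat \<Rightarrow> nat \<Rightarrow> complex" where
  "copy_U V i n' j m =
     (if i = 0 \<and> j = 0 \<and> n' = 0 \<and> m = 0 then 1 else 0)
     + (\<Sum>\<^sub>\<infinity>N\<in>{1..}. if n' = N - i \<and> m = N - j then V i j else 0)"

text \<open>Kraus operator K^(n) = <n|_B U_SB |beta>_B, as a qubit matrix:
  <i|K^(n)|j> = sum_m beta_m <i,n|U_SB|j,m>.\<close>

definition kraus :: "(nat \<Rightarrow> nat \<Rightarrow> complex) \<Rightarrow> (nat \<Rightarrow> complex) \<Rightarrow> nat \<Rightarrow> nat \<Rightarrow> nat \<Rightarrow> complex" where
  "kraus V \<beta> n i j = (\<Sum>\<^sub>\<infinity>m. copy_U V i n j m * \<beta> m)"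

definition tr_adj_mult :: "(nat \<Rightarrow> nat \<Rightarrow> complex) \<Rightarrow> (nat \<Rightarrow> nat \<Rightarrow> complex) \<Rightarrow> complex" where
  "tr_adj_mult V K = (\<Sum>i<2. \<Sum>j<2. cnj (V i j) * K i j)"

definition choi_infidelity :: "(nat \<Rightarrow> nat \<Rightarrow> complex) \<Rightarrow> (nat \<Rightarrow> complex) \<Rightarrow> real" where
  "choi_infidelity V \<beta> = 1 - (1/4) * (\<Sum>\<^sub>\<infinity>n. (cmod (tr_adj_mult V (kraus V \<beta> n)))\<^sup>2)"

definition coherent :: "real \<Rightarrow> nat \<Rightarrow> complex" where
  "coherent \<alpha> n = complex_of_real (exp (-(\<alpha>\<^sup>2) / 2) * \<alpha> ^ n / sqrt (fact n))"

text \<open>Mean battery energy <beta|H_B|beta> with H_B = omega sum_n n |n><n|.\<close>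

definition mean_energy :: "real \<Rightarrow> (nat \<Rightarrow> complex) \<Rightarrow> real" where
  "mean_energy \<omega> \<beta> = (\<Sum>\<^sub>\<infinity>n. \<omega> * real n * (cmod (\<beta> n))\<^sup>2)"

end

theory Submission
  imports Defs "HOL-Real_Asymp.Real_Asymp"
begin

text \<open>Write c_n for the (real) coherent amplitudes and p = |V_01|^2. For n >= 1 unitarity gives
  Tr[V^dagger K^(n)] = 2 (1 - p) c_n + p (c_(n-1) + c_(n+1)), so the Choi fidelity is a quadratic
  expression in the shifted overlaps S_j = sum_k c_k c_(k+j), up to boundary terms of size
  exp(-alpha^2) poly(alpha). The product c_k c_(k+j) is a Poisson(alpha^2) weight times an explicit
  function of k; sandwiching that function between expressions whose Poisson averages are known in
  closed form (low centred moments, and terms that telescope into shifted weights) gives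
  S_1 = 1 - 1/(8 alpha^2) + O(alpha^-4) and S_2 = 1 - 1/(2 alpha^2) + O(alpha^-4). Substituting,
  eps_C = p/(4 alpha^2) + O(alpha^-4); the energy statement is the first Poisson moment.\<close>

lemma sums_ext: "f sums s \<Longrightarrow> (\<And>n. f n = g n) \<Longrightarrow> s = t \<Longrightarrow> g sums t"
  by (metis ext)

definition poisson_weight :: "real \<Rightarrow> nat \<Rightarrow> real" where
  "poisson_weight \<mu> k = exp (- \<mu>) * \<mu> ^ k / fact k"

lemma poisson_weight_0: "poisson_weight \<mu> 0 = exp (- \<mu>)"
  by (simp add: poisson_weight_def)

lemma poisson_weight_Suc: "poisson_weight \<mu> (Suc k) = poisson_weight \<mu> k * (\<mu> / (real k + 1))"
  by (simp add: poisson_weight_def field_simps)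

lemma poisson_weight_nonneg: "\<mu> \<ge> 0 \<Longrightarrow> poisson_weight \<mu> k \<ge> 0"
  by (simp add: poisson_weight_def)

lemma poisson_weight_sums: "poisson_weight \<mu> sums 1"
proof -
  have "(\<lambda>k. exp (- \<mu>) * (\<mu> ^ k /\<^sub>R fact k)) sums (exp (- \<mu>) * exp \<mu>)"
    by (intro sums_mult exp_converges)
  then show ?thesis
    by (rule sums_ext)
      (simp_all add: poisson_weight_def exp_minus divide_inverse scaleR_conv_of_real)
qed

lemma poisson_weight_tail_sums:
  "(\<lambda>k. poisson_weight \<mu> (k + j)) sums (1 - (\<Sum>i<j. poisson_weight \<mu> i))"
  using sums_iff_shift[of "poisson_weight \<mu>" j] poisson_weight_sums by simp

lemma poisson_moment_1: "(\<lambda>k. poisson_weight \<mu> k * real k) sums \<mu>"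
proof (rule sums_Suc_imp)
  show "(\<lambda>k. poisson_weight \<mu> (Suc k) * real (Suc k)) sums \<mu>"
    using sums_mult[OF poisson_weight_sums[of \<mu>], of \<mu>]
    by (rule sums_ext) (simp_all add: poisson_weight_Suc field_simps)
qed simp

lemma poisson_moment_2: "(\<lambda>k. poisson_weight \<mu> k * real k ^ 2) sums (\<mu> * (\<mu> + 1))"
proof (rule sums_Suc_imp)
  show "(\<lambda>k. poisson_weight \<mu> (Suc k) * real (Suc k) ^ 2) sums (\<mu> * (\<mu> + 1))"
    using sums_mult[OF sums_add[OF poisson_moment_1[of \<mu>] poisson_weight_sums[of \<mu>]], of \<mu>]
    by (rule sums_ext) (simp_all add: poisson_weight_Suc field_simps power2_eq_square)
qed simp

lemma poisson_moment_3: "(\<lambda>k. poisson_weight \<mu> k * real k ^ 3) sums (\<mu> * (\<mu>\<^sup>2 + 3 * \<mu> + 1))"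
proof (rule sums_Suc_imp)
  show "(\<lambda>k. poisson_weight \<mu> (Suc k) * real (Suc k) ^ 3) sums (\<mu> * (\<mu>\<^sup>2 + 3 * \<mu> + 1))"
    using sums_mult[OF sums_add[OF sums_add[OF poisson_moment_2[of \<mu>]
          sums_mult[OF poisson_moment_1[of \<mu>], of 2]] poisson_weight_sums], of \<mu>]
    by (rule sums_ext)
      (simp_all add: poisson_weight_Suc field_simps power2_eq_square power3_eq_cube)
qed simp

lemma poisson_shifted_moment_1: "(\<lambda>k. poisson_weight \<mu> k * (real k + 1 - \<mu>)) sums 1"
  using sums_add[OF poisson_moment_1[of \<mu>] sums_mult[OF poisson_weight_sums[of \<mu>], of "1 - \<mu>"]]
  by (rule sums_ext) (simp_all add: algebra_simps)

lemma poisson_shifted_moment_2: "(\<lambda>k. poisson_weight \<mu> k * (real k + 1 - \<mu>)\<^sup>2) sums (\<mu> + 1)"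
  using sums_add[OF sums_add[OF poisson_moment_2[of \<mu>]
        sums_mult[OF poisson_moment_1[of \<mu>], of "2 * (1 - \<mu>)"]]
        sums_mult[OF poisson_weight_sums[of \<mu>], of "(1 - \<mu>)\<^sup>2"]]
  by (rule sums_ext) (simp_all add: algebra_simps power2_eq_square)

lemma poisson_shifted_moment_3: "(\<lambda>k. poisson_weight \<mu> k * (real k + 1 - \<mu>) ^ 3) sums (4 * \<mu> + 1)"
  using sums_add[OF sums_add[OF sums_add[OF poisson_moment_3[of \<mu>]
        sums_mult[OF poisson_moment_2[of \<mu>], of "3 * (1 - \<mu>)"]]
        sums_mult[OF poisson_moment_1[of \<mu>], of "3 * (1 - \<mu>)\<^sup>2"]]
        sums_mult[OF poisson_weight_sums[of \<mu>], of "(1 - \<mu>) ^ 3"]]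
  by (rule sums_ext) (simp_all add: algebra_simps power2_eq_square power3_eq_cube)

definition coherent_amp :: "real \<Rightarrow> nat \<Rightarrow> real" where
  "coherent_amp a k = exp (-(a\<^sup>2) / 2) * a ^ k / sqrt (fact k)"

lemma coherent_eq_coherent_amp: "coherent a k = complex_of_real (coherent_amp a k)"
  by (simp add: coherent_def coherent_amp_def)

lemma coherent_amp_nonneg: "a \<ge> 0 \<Longrightarrow> coherent_amp a k \<ge> 0"
  by (simp add: coherent_amp_def)

lemma coherent_amp_sq: "(coherent_amp a k)\<^sup>2 = poisson_weight (a\<^sup>2) k"
proof -
  have "(exp (-(a\<^sup>2) / 2))\<^sup>2 = exp (-(a\<^sup>2))"
    by (simp add: power2_eq_square exp_add[symmetric])
  then show ?thesis
    by (simp add: coherent_amp_def poisson_weight_def power_mult_distrib power_divide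
        power_mult[symmetric] mult.commute)
qed

lemma coherent_amp_Suc: "coherent_amp a (Suc k) = coherent_amp a k * (a / sqrt (real k + 1))"
proof -
  have "sqrt (fact (Suc k)) = sqrt (fact k) * sqrt (real k + 1)"
    by (simp add: real_sqrt_mult[symmetric] algebra_simps)
  then show ?thesis by (simp add: coherent_amp_def field_simps)
qed

lemma coherent_amp_sq_sums: "(\<lambda>k. (coherent_amp a k)\<^sup>2) sums 1"
  by (simp add: coherent_amp_sq poisson_weight_sums)

definition coherent_overlap :: "real \<Rightarrow> nat \<Rightarrow> real" where
  "coherent_overlap a j = (\<Sum>k. coherent_amp a k * coherent_amp a (k + j))"

lemma coherent_overlap_sums:
  "(\<lambda>k. coherent_amp a k * coherent_amp a (k + j)) sums coherent_overlap a j"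
proof -
  have dominant: "summable (\<lambda>k. (coherent_amp a k)\<^sup>2 + (coherent_amp a (k + j))\<^sup>2)"
    using coherent_amp_sq_sums[of a] summable_iff_shift[of "\<lambda>k. (coherent_amp a k)\<^sup>2" j]
    by (intro summable_add) (auto simp: sums_iff)
  have product_bound: "norm (x * y) \<le> x\<^sup>2 + y\<^sup>2" for x y :: real
  proof -
    have "2 * \<bar>x\<bar> * \<bar>y\<bar> \<le> x\<^sup>2 + y\<^sup>2"
      using sum_squares_bound[of "\<bar>x\<bar>" "\<bar>y\<bar>"] by simp
    moreover have "0 \<le> \<bar>x\<bar> * \<bar>y\<bar>" by simp
    ultimately show ?thesis unfolding real_norm_def abs_mult by linarith
  qed
  show ?thesis
    unfolding coherent_overlap_def
    by (intro summable_sums summable_comparison_test'[OF dominant product_bound])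
qed

lemma coherent_amp_mult_Suc:
  "coherent_amp a k * coherent_amp a (Suc k) = poisson_weight (a\<^sup>2) k * (a / sqrt (real k + 1))"
  unfolding coherent_amp_sq[symmetric] by (simp add: coherent_amp_Suc power2_eq_square)

lemma coherent_amp_mult_Suc_Suc:
  "coherent_amp a k * coherent_amp a (Suc (Suc k))
     = poisson_weight (a\<^sup>2) k * (a\<^sup>2 / sqrt ((real k + 1) * (real k + 2)))"
  unfolding coherent_amp_sq[symmetric]
  by (simp add: coherent_amp_Suc power2_eq_square real_sqrt_mult
      add.commute numeral_2_eq_2)

text \<open>The cubic Taylor polynomial of (1 + u) powr (-1/2) at u = s^2 - 1; the gap is
  (s - 1)^4 (5 s^3 + 20 s^2 + 29 s + 16) / (16 s).\<close>

lemma inverse_ge_taylor_cubic: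
  fixes s :: real
  assumes "s > 0"
  shows "1 - (s\<^sup>2 - 1) / 2 + 3 * (s\<^sup>2 - 1)\<^sup>2 / 8 - 5 * (s\<^sup>2 - 1) ^ 3 / 16 \<le> 1 / s"
proof -
  have "16 * (1 - s * (1 - (s\<^sup>2 - 1) / 2 + 3 * (s\<^sup>2 - 1)\<^sup>2 / 8 - 5 * (s\<^sup>2 - 1) ^ 3 / 16))
      = (s - 1) ^ 4 * (5 * s ^ 3 + 20 * s\<^sup>2 + 29 * s + 16)"
    by (simp add: field_simps power2_eq_square power3_eq_cube power4_eq_xxxx)
  also have "\<dots> \<ge> 0"
    using assms by (intro mult_nonneg_nonneg) (auto simp: zero_le_even_power)
  finally show ?thesis
    using assms by (simp add: field_simps)
qed

text \<open>The 1/s^2 term is allowed because its Poisson average telescopes; the gap is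
  (s - 1)^4 (s^2 + 4 s + 5) / (16 s^2).\<close>

lemma inverse_le_quadratic_plus_inverse_sq:
  fixes s :: real
  assumes "s > 0"
  shows "1 / s \<le> 5 / (16 * s\<^sup>2) + 11 / 16 - 3 * (s\<^sup>2 - 1) / 16 + (s\<^sup>2 - 1)\<^sup>2 / 16"
proof -
  have "16 * s\<^sup>2 * (5 / (16 * s\<^sup>2) + 11 / 16 - 3 * (s\<^sup>2 - 1) / 16 + (s\<^sup>2 - 1)\<^sup>2 / 16 - 1 / s)
      = (s - 1) ^ 4 * (s\<^sup>2 + 4 * s + 5)"
    using assms by (simp add: field_simps power2_eq_square power3_eq_cube power4_eq_xxxx)
  also have "\<dots> \<ge> 0"
    using assms by (intro mult_nonneg_nonneg) (auto simp: zero_le_even_power)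
  finally show ?thesis
    using assms by (simp add: zero_le_mult_iff)
qed

text \<open>With x = k + 1, multiplication by mu times the Poisson(mu) weight of k turns 1/x, 1/(x(x+1))
  and 1/(x(x+1)(x+2)) into shifted Poisson weights; both bounds are combinations of these, since
  (2x + 1)/(2x(x + 1)) = 1/x - 1/(2x(x + 1)).\<close>

lemma inverse_sqrt_mult_Suc_bounds:
  fixes x :: real
  assumes "x \<ge> 1"
  shows "(2 * x + 1) / (2 * x * (x + 1)) - 3 / (x * (x + 1) * (x + 2)) \<le> 1 / sqrt (x * (x + 1))"
    and "1 / sqrt (x * (x + 1)) \<le> (2 * x + 1) / (2 * x * (x + 1))"
proof -
  define z where "z = x * (x + 1)"
  have z: "z > 0" using assms by (simp add: z_def)
  have inverse_sqrt: "1 / sqrt z = sqrt z / z"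
    using z by (simp add: field_simps)
  have upper: "sqrt z \<le> (2 * x + 1) / 2"
    using arith_geo_mean_sqrt[of x "x + 1"] assms by (simp add: z_def)
  have lower: "(2 * x + 1) / 2 - 3 / (x + 2) \<le> sqrt z"
  proof (rule real_le_rsqrt)
    have "z * (x + 2)\<^sup>2 - (x * x + 5 / 2 * x - 2)\<^sup>2 = 23 / 4 * x\<^sup>2 + 14 * x - 4"
      by (simp add: z_def algebra_simps power2_eq_square)
    also have "\<dots> \<ge> 0" using assms zero_le_power2[of x] by linarith
    finally have "(x * x + 5 / 2 * x - 2)\<^sup>2 / (x + 2)\<^sup>2 \<le> z"
      using assms by (simp add: pos_divide_le_eq)
    moreover have "(2 * x + 1) / 2 - 3 / (x + 2) = (x * x + 5 / 2 * x - 2) / (x + 2)"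
      using assms by (simp add: field_simps)
    ultimately show "((2 * x + 1) / 2 - 3 / (x + 2))\<^sup>2 \<le> z"
      by (simp add: power_divide)
  qed
  have "(2 * x + 1) / (2 * x * (x + 1)) - 3 / (x * (x + 1) * (x + 2))
      = ((2 * x + 1) / 2 - 3 / (x + 2)) / z"
    by (simp add: z_def diff_divide_distrib ac_simps)
  also have "\<dots> \<le> sqrt z / z"
    using lower z by (intro divide_right_mono) auto
  also have "\<dots> = 1 / sqrt z"
    by (rule inverse_sqrt[symmetric])
  finally show "(2 * x + 1) / (2 * x * (x + 1)) - 3 / (x * (x + 1) * (x + 2))
      \<le> 1 / sqrt (x * (x + 1))"
    by (simp add: z_def)
  have "1 / sqrt z = sqrt z / z"
    by (rule inverse_sqrt)
  also have "\<dots> \<le> ((2 * x + 1) / 2) / z"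
    using upper z by (intro divide_right_mono) auto
  also have "\<dots> = (2 * x + 1) / (2 * x * (x + 1))"
    by (simp add: z_def)
  finally show "1 / sqrt (x * (x + 1)) \<le> (2 * x + 1) / (2 * x * (x + 1))"
    by (simp add: z_def)
qed

lemma coherent_amp_mult_Suc_bounds:
  fixes k :: nat
  assumes "a > 0"
  defines "P \<equiv> poisson_weight (a\<^sup>2)" and "u \<equiv> (real k + 1 - a\<^sup>2) / a\<^sup>2"
  shows "P k * (1 - u / 2 + 3 * u\<^sup>2 / 8 - 5 * u ^ 3 / 16)
           \<le> coherent_amp a k * coherent_amp a (Suc k)"
    and "coherent_amp a k * coherent_amp a (Suc k)
           \<le> 5 / 16 * P (Suc k) + P k * (11 / 16 - 3 * u / 16 + u\<^sup>2 / 16)"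
proof -
  define s where "s = sqrt (real k + 1) / a"
  have s: "s > 0" "s\<^sup>2 - 1 = u" "1 / s = a / sqrt (real k + 1)"
    using assms(1) by (simp_all add: s_def u_def power_divide field_simps)
  have "P k * (5 / (16 * s\<^sup>2)) = 5 / 16 * P (Suc k)"
    using assms(1) by (simp add: P_def poisson_weight_Suc s_def power_divide field_simps)
  then have upper_eq: "5 / 16 * P (Suc k) + P k * (11 / 16 - 3 * u / 16 + u\<^sup>2 / 16)
      = P k * (5 / (16 * s\<^sup>2) + 11 / 16 - 3 * (s\<^sup>2 - 1) / 16 + (s\<^sup>2 - 1)\<^sup>2 / 16)"
    by (simp add: s(2) algebra_simps)
  have term_eq: "coherent_amp a k * coherent_amp a (Suc k) = P k * (1 / s)"
    by (simp add: coherent_amp_mult_Suc P_def s(3))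
  have "P k \<ge> 0"
    by (simp add: P_def poisson_weight_nonneg)
  then show "P k * (1 - u / 2 + 3 * u\<^sup>2 / 8 - 5 * u ^ 3 / 16)
      \<le> coherent_amp a k * coherent_amp a (Suc k)"
    unfolding term_eq s(2)[symmetric] by (intro mult_left_mono inverse_ge_taylor_cubic s(1))
  show "coherent_amp a k * coherent_amp a (Suc k)
      \<le> 5 / 16 * P (Suc k) + P k * (11 / 16 - 3 * u / 16 + u\<^sup>2 / 16)"
    unfolding upper_eq term_eq using \<open>P k \<ge> 0\<close>
    by (intro mult_left_mono inverse_le_quadratic_plus_inverse_sq s(1))
qed

lemma coherent_overlap_1_bounds:
  assumes "a > 0"
  defines "\<mu> \<equiv> a\<^sup>2"
  shows "1 - 1 / (2 * \<mu>) + 3 * (\<mu> + 1) / (8 * \<mu>\<^sup>2) - 5 * (4 * \<mu> + 1) / (16 * \<mu> ^ 3)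
           \<le> coherent_overlap a 1"
    and "coherent_overlap a 1
           \<le> 5 / 16 * (1 - exp (- \<mu>)) + 11 / 16 - 3 / (16 * \<mu>) + (\<mu> + 1) / (16 * \<mu>\<^sup>2)"
proof -
  define P where "P = poisson_weight \<mu>"
  define u where "u k = (real k + 1 - \<mu>) / \<mu>" for k
  have overlap_sums: "(\<lambda>k. coherent_amp a k * coherent_amp a (Suc k)) sums coherent_overlap a 1"
    using coherent_overlap_sums[of a 1] by simp
  have "(\<lambda>k. P k - P k * (real k + 1 - \<mu>) / \<mu> / 2 + 3 * (P k * (real k + 1 - \<mu>)\<^sup>2 / \<mu>\<^sup>2) / 8
              - 5 * (P k * (real k + 1 - \<mu>) ^ 3 / \<mu> ^ 3) / 16)
      sums (1 - 1 / \<mu> / 2 + 3 * ((\<mu> + 1) / \<mu>\<^sup>2) / 8 - 5 * ((4 * \<mu> + 1) / \<mu> ^ 3) / 16)"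
    unfolding P_def
    by (intro sums_diff sums_add sums_divide sums_mult poisson_weight_sums poisson_shifted_moment_1
        poisson_shifted_moment_2 poisson_shifted_moment_3)
  then have "(\<lambda>k. P k * (1 - u k / 2 + 3 * (u k)\<^sup>2 / 8 - 5 * u k ^ 3 / 16))
      sums (1 - 1 / (2 * \<mu>) + 3 * (\<mu> + 1) / (8 * \<mu>\<^sup>2) - 5 * (4 * \<mu> + 1) / (16 * \<mu> ^ 3))"
    by (rule sums_ext) (simp_all add: u_def power_divide algebra_simps)
  then show "1 - 1 / (2 * \<mu>) + 3 * (\<mu> + 1) / (8 * \<mu>\<^sup>2) - 5 * (4 * \<mu> + 1) / (16 * \<mu> ^ 3)
      \<le> coherent_overlap a 1"
    using coherent_amp_mult_Suc_bounds(1)[OF assms(1), folded \<mu>_def P_def]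
    by (intro sums_le[OF _ _ overlap_sums]) (simp_all add: u_def)
  have "(\<lambda>k. 5 / 16 * P (Suc k) + 11 / 16 * P k - 3 * (P k * (real k + 1 - \<mu>) / \<mu>) / 16
              + P k * (real k + 1 - \<mu>)\<^sup>2 / \<mu>\<^sup>2 / 16)
      sums (5 / 16 * (1 - P 0) + 11 / 16 - 3 * (1 / \<mu>) / 16 + (\<mu> + 1) / \<mu>\<^sup>2 / 16)"
    using poisson_weight_tail_sums[of \<mu> 1] sums_mult[OF poisson_weight_sums[of \<mu>], of "11 / 16"]
    unfolding P_def
    by (intro sums_diff sums_add sums_divide sums_mult poisson_weight_sums poisson_shifted_moment_1
        poisson_shifted_moment_2) simp_all
  then have "(\<lambda>k. 5 / 16 * P (Suc k) + P k * (11 / 16 - 3 * u k / 16 + (u k)\<^sup>2 / 16))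
      sums (5 / 16 * (1 - exp (- \<mu>)) + 11 / 16 - 3 / (16 * \<mu>) + (\<mu> + 1) / (16 * \<mu>\<^sup>2))"
    by (rule sums_ext) (simp_all add: u_def P_def poisson_weight_0 power_divide algebra_simps)
  then show "coherent_overlap a 1
      \<le> 5 / 16 * (1 - exp (- \<mu>)) + 11 / 16 - 3 / (16 * \<mu>) + (\<mu> + 1) / (16 * \<mu>\<^sup>2)"
    using coherent_amp_mult_Suc_bounds(2)[OF assms(1), folded \<mu>_def P_def]
    by (intro sums_le[OF _ overlap_sums]) (simp_all add: u_def)
qed

lemma coherent_overlap_1_approx:
  assumes "a \<ge> 1"
  shows "\<bar>coherent_overlap a 1 - (1 - 1 / (8 * a\<^sup>2))\<bar> \<le> 2 / a ^ 4"
proof -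
  define \<mu> where "\<mu> = a\<^sup>2"
  have a: "a > 0" and \<mu>: "\<mu> \<ge> 1"
    using assms by (auto simp: \<mu>_def one_le_power)
  have "1 - 1 / (8 * \<mu>) - 2 / \<mu>\<^sup>2 \<le> 1 - 1 / (8 * \<mu>) - (7 / 8 + 5 / (16 * \<mu>)) / \<mu>\<^sup>2"
  proof -
    have "5 / (16 * \<mu>) \<le> 5 / 16" using \<mu> by (simp add: divide_le_eq)
    then show ?thesis by (simp add: divide_right_mono)
  qed
  also have "\<dots> = 1 - 1 / (2 * \<mu>) + 3 * (\<mu> + 1) / (8 * \<mu>\<^sup>2) - 5 * (4 * \<mu> + 1) / (16 * \<mu> ^ 3)"
    using \<mu> by (simp add: field_simps power2_eq_square power3_eq_cube)
  also have "\<dots> \<le> coherent_overlap a 1"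
    using coherent_overlap_1_bounds(1)[OF a] by (simp add: \<mu>_def)
  finally have lower: "1 - 1 / (8 * \<mu>) - 2 / \<mu>\<^sup>2 \<le> coherent_overlap a 1" .
  have "coherent_overlap a 1
      \<le> 5 / 16 * (1 - exp (- \<mu>)) + 11 / 16 - 3 / (16 * \<mu>) + (\<mu> + 1) / (16 * \<mu>\<^sup>2)"
    using coherent_overlap_1_bounds(2)[OF a] by (simp add: \<mu>_def)
  also have "\<dots> = 1 - 1 / (8 * \<mu>) + 1 / (16 * \<mu>\<^sup>2) - 5 / 16 * exp (- \<mu>)"
    using \<mu> by (simp add: field_simps power2_eq_square)
  also have "\<dots> \<le> 1 - 1 / (8 * \<mu>) + 2 / \<mu>\<^sup>2"
  proof -
    have "1 / (16 * \<mu>\<^sup>2) \<le> 2 / \<mu>\<^sup>2" using \<mu> by (simp add: frac_le)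
    moreover have "0 \<le> exp (- \<mu>)" by simp
    ultimately show ?thesis by linarith
  qed
  finally have upper: "coherent_overlap a 1 \<le> 1 - 1 / (8 * \<mu>) + 2 / \<mu>\<^sup>2" .
  show ?thesis
    using lower upper by (simp add: \<mu>_def abs_le_iff)
qed

lemma coherent_amp_mult_Suc_Suc_bounds:
  assumes "a > 0"
  defines "P \<equiv> poisson_weight (a\<^sup>2)"
  shows "P (Suc k) - P (Suc (Suc k)) / (2 * a\<^sup>2) - 3 * P (Suc (Suc (Suc k))) / a ^ 4
           \<le> coherent_amp a k * coherent_amp a (Suc (Suc k))"
    and "coherent_amp a k * coherent_amp a (Suc (Suc k)) \<le> P (Suc k) - P (Suc (Suc k)) / (2 * a\<^sup>2)"
proof -
  define x where "x = real k + 1"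
  define Q where "Q = P k * a\<^sup>2"
  have x: "x \<ge> 1" by (simp add: x_def)
  have Q: "Q \<ge> 0" by (simp add: Q_def P_def poisson_weight_nonneg)
  have nonzero: "a \<noteq> 0" "x \<noteq> 0" "x + 1 \<noteq> 0" "x + 2 \<noteq> 0"
    using assms(1) x by auto
  have P1: "P (Suc k) = Q / x"
    by (simp add: P_def Q_def x_def poisson_weight_Suc)
  have "P (Suc (Suc k)) = P (Suc k) * (a\<^sup>2 / (x + 1))"
    by (simp add: P_def x_def poisson_weight_Suc add_ac)
  then have P2: "P (Suc (Suc k)) = Q * a\<^sup>2 / (x * (x + 1))"
    using nonzero by (simp add: P1 divide_simps)
  have "P (Suc (Suc (Suc k))) = P (Suc (Suc k)) * (a\<^sup>2 / (x + 2))"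
    by (simp add: P_def x_def poisson_weight_Suc add_ac)
  then have P3: "P (Suc (Suc (Suc k))) = Q * a ^ 4 / (x * (x + 1) * (x + 2))"
    using nonzero by (simp add: P2 divide_simps power4_eq_xxxx power2_eq_square)
  have upper_eq: "P (Suc k) - P (Suc (Suc k)) / (2 * a\<^sup>2) = Q * ((2 * x + 1) / (2 * x * (x + 1)))"
    using nonzero by (simp add: P1 P2 divide_simps) (simp add: algebra_simps)
  have lower_eq: "3 * P (Suc (Suc (Suc k))) / a ^ 4 = Q * (3 / (x * (x + 1) * (x + 2)))"
    using nonzero by (simp add: P3 mult_ac)
  have term_eq: "coherent_amp a k * coherent_amp a (Suc (Suc k)) = Q * (1 / sqrt (x * (x + 1)))"
    by (simp add: coherent_amp_mult_Suc_Suc P_def Q_def x_def add.commute)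
  show "P (Suc k) - P (Suc (Suc k)) / (2 * a\<^sup>2) - 3 * P (Suc (Suc (Suc k))) / a ^ 4
      \<le> coherent_amp a k * coherent_amp a (Suc (Suc k))"
    unfolding upper_eq lower_eq term_eq right_diff_distrib[symmetric]
    by (intro mult_left_mono inverse_sqrt_mult_Suc_bounds x Q)
  show "coherent_amp a k * coherent_amp a (Suc (Suc k)) \<le> P (Suc k) - P (Suc (Suc k)) / (2 * a\<^sup>2)"
    unfolding upper_eq term_eq
    by (intro mult_left_mono inverse_sqrt_mult_Suc_bounds x Q)
qed

lemma coherent_overlap_2_bounds:
  assumes "a > 0"
  defines "P \<equiv> poisson_weight (a\<^sup>2)"
  shows "(1 - P 0) - (1 - P 0 - P 1) / (2 * a\<^sup>2) - 3 * (1 - P 0 - P 1 - P 2) / a ^ 4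
           \<le> coherent_overlap a 2"
    and "coherent_overlap a 2 \<le> (1 - P 0) - (1 - P 0 - P 1) / (2 * a\<^sup>2)"
proof -
  have tail: "(\<lambda>k. P (Suc k)) sums (1 - P 0)" "(\<lambda>k. P (Suc (Suc k))) sums (1 - P 0 - P 1)"
    "(\<lambda>k. P (Suc (Suc (Suc k)))) sums (1 - P 0 - P 1 - P 2)"
    using poisson_weight_tail_sums[of "a\<^sup>2" 1] poisson_weight_tail_sums[of "a\<^sup>2" 2]
      poisson_weight_tail_sums[of "a\<^sup>2" 3]
    by (simp_all add: P_def numeral_3_eq_3 numeral_2_eq_2 diff_diff_eq)
  have overlap_sums:
    "(\<lambda>k. coherent_amp a k * coherent_amp a (Suc (Suc k))) sums coherent_overlap a 2"
    using coherent_overlap_sums[of a 2] by (simp add: numeral_2_eq_2)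
  show "(1 - P 0) - (1 - P 0 - P 1) / (2 * a\<^sup>2) - 3 * (1 - P 0 - P 1 - P 2) / a ^ 4
      \<le> coherent_overlap a 2"
    by (rule sums_le[OF coherent_amp_mult_Suc_Suc_bounds(1)[OF assms(1), folded P_def] _
          overlap_sums])
      (intro sums_diff sums_divide sums_mult tail)
  show "coherent_overlap a 2 \<le> (1 - P 0) - (1 - P 0 - P 1) / (2 * a\<^sup>2)"
    by (rule sums_le[OF coherent_amp_mult_Suc_Suc_bounds(2)[OF assms(1), folded P_def]
          overlap_sums])
      (intro sums_diff sums_divide tail)
qed

lemma coherent_overlap_2_approx:
  assumes "a \<ge> 1"
  shows "\<bar>coherent_overlap a 2 - (1 - 1 / (2 * a\<^sup>2))\<bar> \<le> 3 / a ^ 4 + exp (-(a\<^sup>2))"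
proof -
  define P where "P = poisson_weight (a\<^sup>2)"
  define d where "d = exp (-(a\<^sup>2)) * (1 - 1 / a\<^sup>2)"
  have a: "a > 0" and a2: "a\<^sup>2 \<ge> 1"
    using assms by (auto simp: one_le_power)
  have upper_eq: "(1 - P 0) - (1 - P 0 - P 1) / (2 * a\<^sup>2) = 1 - 1 / (2 * a\<^sup>2) - d / 2"
    using a by (simp add: P_def d_def poisson_weight_def field_simps)
  have "0 \<le> 1 - 1 / a\<^sup>2"
    using a2 by (simp add: divide_le_eq)
  then have "0 \<le> d" "d \<le> exp (-(a\<^sup>2))"
    by (simp_all add: d_def mult_left_le)
  moreover have "3 * (1 - P 0 - P 1 - P 2) / a ^ 4 \<le> 3 / a ^ 4"
  proof -
    have "P k \<ge> 0" for k
      by (simp add: P_def poisson_weight_nonneg)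
    then have "1 - P 0 - P 1 - P 2 \<le> 1"
      using \<open>P 0 \<ge> 0\<close> \<open>P 1 \<ge> 0\<close> \<open>P 2 \<ge> 0\<close> by linarith
    then show ?thesis
      by (simp add: divide_right_mono)
  qed
  ultimately show ?thesis
    using coherent_overlap_2_bounds[OF a, folded P_def] unfolding upper_eq by (simp add: abs_le_iff)
qed

lemma infsum_single:
  fixes f :: "'a \<Rightarrow> 'b::{comm_monoid_add,t2_space}"
  assumes "\<And>x. x \<in> A \<Longrightarrow> x \<noteq> a \<Longrightarrow> f x = 0"
  shows "infsum f A = (if a \<in> A then f a else 0)"
proof -
  have "infsum f A = infsum f (A \<inter> {a})"
    by (rule infsum_cong_neutral) (use assms in auto)
  then show ?thesis by (cases "a \<in> A") auto
qed

lemma copy_U_00: "copy_U V 0 n 0 m = (if m = n then (if n = 0 then 1 else V 0 0) else 0)"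
  unfolding copy_U_def by (subst infsum_single[where a = n]) auto

lemma copy_U_01: "copy_U V 0 n 1 m = (if m = n - 1 \<and> n \<noteq> 0 then V 0 1 else 0)"
  unfolding copy_U_def by (subst infsum_single[where a = n]) auto

lemma copy_U_10: "copy_U V 1 n 0 m = (if m = Suc n then V 1 0 else 0)"
  unfolding copy_U_def by (subst infsum_single[where a = "Suc n"]) auto

lemma copy_U_11: "copy_U V 1 n 1 m = (if m = n then V 1 1 else 0)"
  unfolding copy_U_def by (subst infsum_single[where a = "Suc n"]) auto

lemma kraus_00: "kraus V \<beta> n 0 0 = (if n = 0 then 1 else V 0 0) * \<beta> n"
  unfolding kraus_def copy_U_00 by (subst infsum_single[where a = n]) auto

lemma kraus_01: "kraus V \<beta> n 0 1 = (if n = 0 then 0 else V 0 1 * \<beta> (n - 1))"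
  unfolding kraus_def copy_U_01 by (subst infsum_single[where a = "n - 1"]) auto

lemma kraus_10: "kraus V \<beta> n 1 0 = V 1 0 * \<beta> (Suc n)"
  unfolding kraus_def copy_U_10 by (subst infsum_single[where a = "Suc n"]) auto

lemma kraus_11: "kraus V \<beta> n 1 1 = V 1 1 * \<beta> n"
  unfolding kraus_def copy_U_11 by (subst infsum_single[where a = n]) auto

lemma cnj_mult_self: "cnj z * z = complex_of_real ((cmod z)\<^sup>2)"
  by (metis complex_norm_square mult.commute)

lemma tr_adj_mult_kraus_0:
  "tr_adj_mult V (kraus V \<beta> 0)
     = cnj (V 0 0) * \<beta> 0 + of_real ((cmod (V 1 0))\<^sup>2) * \<beta> 1 + of_real ((cmod (V 1 1))\<^sup>2) * \<beta> 0"
  by (simp add: tr_adj_mult_def numeral_2_eq_2 kraus_00 kraus_01[unfolded One_nat_def]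
      kraus_10[unfolded One_nat_def] kraus_11[unfolded One_nat_def] cnj_mult_self
      mult.assoc[symmetric])

lemma tr_adj_mult_kraus_Suc:
  "tr_adj_mult V (kraus V \<beta> (Suc n))
     = of_real ((cmod (V 0 0))\<^sup>2) * \<beta> (Suc n) + of_real ((cmod (V 0 1))\<^sup>2) * \<beta> n
       + of_real ((cmod (V 1 0))\<^sup>2) * \<beta> (Suc (Suc n)) + of_real ((cmod (V 1 1))\<^sup>2) * \<beta> (Suc n)"
  by (simp add: tr_adj_mult_def numeral_2_eq_2 kraus_00 kraus_01[unfolded One_nat_def]
      kraus_10[unfolded One_nat_def] kraus_11[unfolded One_nat_def] cnj_mult_self
      mult.assoc[symmetric])

lemma qubit_unitary_norms:
  assumes "qubit_unitary V"
  shows "(cmod (V 1 0))\<^sup>2 = (cmod (V 0 1))\<^sup>2"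
    and "(cmod (V 0 0))\<^sup>2 = 1 - (cmod (V 0 1))\<^sup>2"
    and "(cmod (V 1 1))\<^sup>2 = 1 - (cmod (V 0 1))\<^sup>2"
proof -
  have sum_eq_1: "complex_of_real (x + y) = 1 \<Longrightarrow> x + y = 1" for x y :: real
    by (metis of_real_eq_1_iff)
  have "(\<Sum>j<2. cnj (V j i) * V j i) = 1" if "i < 2" for i
    using assms that unfolding qubit_unitary_def by auto
  then have column: "(cmod (V 0 i))\<^sup>2 + (cmod (V 1 i))\<^sup>2 = 1" if "i < 2" for i
    using that by (intro sum_eq_1) (simp add: numeral_2_eq_2 cnj_mult_self)
  have "(\<Sum>j<2. V 0 j * cnj (V 0 j)) = 1"
    using assms unfolding qubit_unitary_def by auto
  then have row: "(cmod (V 0 0))\<^sup>2 + (cmod (V 0 1))\<^sup>2 = 1"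
    by (intro sum_eq_1) (simp only: of_real_add complex_norm_square, simp add: numeral_2_eq_2)
  show "(cmod (V 1 0))\<^sup>2 = (cmod (V 0 1))\<^sup>2"
    and "(cmod (V 0 0))\<^sup>2 = 1 - (cmod (V 0 1))\<^sup>2"
    and "(cmod (V 1 1))\<^sup>2 = 1 - (cmod (V 0 1))\<^sup>2"
    using column[of 0] column[of 1] row by linarith+
qed

lemma qubit_unitary_norm_01_le_1:
  assumes "qubit_unitary V"
  shows "(cmod (V 0 1))\<^sup>2 \<le> 1"
  using qubit_unitary_norms(2)[OF assms] zero_le_power2[of "cmod (V 0 0)"] by linarith

lemma tr_adj_mult_kraus_coherent_Suc:
  assumes "qubit_unitary V"
  defines "p \<equiv> (cmod (V 0 1))\<^sup>2"
  shows "tr_adj_mult V (kraus V (coherent a) (Suc n))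
     = of_real (2 * (1 - p) * coherent_amp a (Suc n)
                + p * (coherent_amp a n + coherent_amp a (Suc (Suc n))))"
  unfolding tr_adj_mult_kraus_Suc qubit_unitary_norms[OF assms(1)] coherent_eq_coherent_amp
    of_real_mult[symmetric] of_real_add[symmetric] p_def
  by (simp add: algebra_simps)

lemma norm_tr_adj_mult_kraus_coherent_0:
  assumes "qubit_unitary V" and "a \<ge> 0"
  shows "cmod (tr_adj_mult V (kraus V (coherent a) 0)) \<le> (2 + a) * coherent_amp a 0"
proof -
  define c where "c = coherent_amp a 0"
  have c: "c \<ge> 0" "coherent_amp a (Suc 0) = a * c"
    using assms(2) coherent_amp_Suc[of a 0] by (simp_all add: c_def coherent_amp_nonneg)
  have "(cmod (V 0 0))\<^sup>2 \<le> 1" "(cmod (V 1 0))\<^sup>2 \<le> 1" "(cmod (V 1 1))\<^sup>2 \<le> 1"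
    using qubit_unitary_norms[OF assms(1)] zero_le_power2[of "cmod (V 0 0)"]
      zero_le_power2[of "cmod (V 0 1)"] by linarith+
  then have le_1: "cmod (V 0 0) \<le> 1" "(cmod (V 1 0))\<^sup>2 \<le> 1" "(cmod (V 1 1))\<^sup>2 \<le> 1"
    by (simp_all add: power_le_one_iff)
  define x where "x = cnj (V 0 0) * of_real c"
  define y where "y = complex_of_real ((cmod (V 1 0))\<^sup>2 * (a * c))"
  define z where "z = complex_of_real ((cmod (V 1 1))\<^sup>2 * c)"
  have T0_eq: "tr_adj_mult V (kraus V (coherent a) 0) = x + y + z"
    by (simp add: tr_adj_mult_kraus_0 coherent_eq_coherent_amp c c_def x_def y_def z_def)
  have "cmod (tr_adj_mult V (kraus V (coherent a) 0)) \<le> cmod x + cmod y + cmod z"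
    unfolding T0_eq using norm_triangle_ineq[of "x + y" z] norm_triangle_ineq[of x y] by linarith
  also have "\<dots> = cmod (V 0 0) * c + (cmod (V 1 0))\<^sup>2 * (a * c) + (cmod (V 1 1))\<^sup>2 * c"
    using c assms(2) by (simp add: x_def y_def z_def norm_mult norm_power)
  also have "\<dots> \<le> c + a * c + c"
    using c assms(2) le_1 by (intro add_mono mult_left_le_one_le mult_nonneg_nonneg) auto
  finally show ?thesis
    by (simp add: c_def algebra_simps)
qed

lemma coherent_three_term_sq_sums:
  fixes a p :: real
  defines "c \<equiv> coherent_amp a"
  shows "(\<lambda>n. (2 * (1 - p) * c (Suc n) + p * (c n + c (Suc (Suc n))))\<^sup>2) sums
    (4 * (1 - p)\<^sup>2 * (1 - (c 0)\<^sup>2) + p\<^sup>2 * (2 + 2 * coherent_overlap a 2 - (c 0)\<^sup>2 - (c 1)\<^sup>2)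
       + 4 * p * (1 - p) * (2 * coherent_overlap a 1 - c 0 * c 1))"
proof -
  have sq: "(\<lambda>n. (c n)\<^sup>2) sums 1"
    by (simp add: c_def coherent_amp_sq_sums)
  then have sq_1: "(\<lambda>n. (c (Suc n))\<^sup>2) sums (1 - (c 0)\<^sup>2)"
    using sums_Suc_iff[of "\<lambda>n. (c n)\<^sup>2"] by simp
  then have sq_2: "(\<lambda>n. (c (Suc (Suc n)))\<^sup>2) sums (1 - (c 0)\<^sup>2 - (c 1)\<^sup>2)"
    using sums_Suc_iff[of "\<lambda>n. (c (Suc n))\<^sup>2"] by simp
  have ov_1: "(\<lambda>n. c n * c (Suc n)) sums coherent_overlap a 1"
    using coherent_overlap_sums[of a 1] by (simp add: c_def)
  then have ov_1': "(\<lambda>n. c (Suc n) * c (Suc (Suc n))) sums (coherent_overlap a 1 - c 0 * c 1)"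
    using sums_Suc_iff[of "\<lambda>n. c n * c (Suc n)"] by simp
  have ov_2: "(\<lambda>n. c n * c (Suc (Suc n))) sums coherent_overlap a 2"
    using coherent_overlap_sums[of a 2] by (simp add: c_def numeral_2_eq_2)
  have "(\<lambda>n. 4 * (1 - p)\<^sup>2 * (c (Suc n))\<^sup>2
        + p\<^sup>2 * ((c n)\<^sup>2 + 2 * (c n * c (Suc (Suc n))) + (c (Suc (Suc n)))\<^sup>2)
        + 4 * p * (1 - p) * (c n * c (Suc n) + c (Suc n) * c (Suc (Suc n))))
      sums (4 * (1 - p)\<^sup>2 * (1 - (c 0)\<^sup>2)
        + p\<^sup>2 * (1 + 2 * coherent_overlap a 2 + (1 - (c 0)\<^sup>2 - (c 1)\<^sup>2))
        + 4 * p * (1 - p) * (coherent_overlap a 1 + (coherent_overlap a 1 - c 0 * c 1)))"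
    by (intro sums_add sums_mult sq sq_1 sq_2 ov_1 ov_1' ov_2)
  then show ?thesis
    by (rule sums_ext) (simp_all add: power2_eq_square algebra_simps)
qed

lemma choi_infidelity_coherent:
  fixes a :: real
  assumes "qubit_unitary V"
  defines "p \<equiv> (cmod (V 0 1))\<^sup>2" and "c \<equiv> coherent_amp a"
  shows "choi_infidelity V (coherent a) = 1 - ((cmod (tr_adj_mult V (kraus V (coherent a) 0)))\<^sup>2
    + (4 * (1 - p)\<^sup>2 * (1 - (c 0)\<^sup>2) + p\<^sup>2 * (2 + 2 * coherent_overlap a 2 - (c 0)\<^sup>2 - (c 1)\<^sup>2)
       + 4 * p * (1 - p) * (2 * coherent_overlap a 1 - c 0 * c 1))) / 4"
    (is "_ = 1 - (_ + ?S) / 4")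
proof -
  define t where "t n = (cmod (tr_adj_mult V (kraus V (coherent a) n)))\<^sup>2" for n
  have "(\<lambda>n. t (Suc n)) sums ?S"
    using coherent_three_term_sq_sums[where a = a and p = p]
    unfolding t_def tr_adj_mult_kraus_coherent_Suc[OF assms(1)] norm_of_real power2_abs
    by (simp add: p_def c_def)
  then have "t sums (t 0 + ?S)"
    by (simp add: sums_Suc_iff algebra_simps)
  then have "(t has_sum (t 0 + ?S)) UNIV"
    by (rule sums_nonneg_imp_has_sum) (simp add: t_def)
  then show ?thesis
    unfolding choi_infidelity_def t_def[abs_def] by (simp add: infsumI)
qed

lemma choi_infidelity_coherent_expansion:
  fixes a :: real
  assumes "qubit_unitary V" and "a \<noteq> 0"
  defines "p \<equiv> (cmod (V 0 1))\<^sup>2"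
  shows "choi_infidelity V (coherent a) - p / (4 * a\<^sup>2)
    = p\<^sup>2 / 2 * (1 - 1 / (2 * a\<^sup>2) - coherent_overlap a 2)
      + 2 * p * (1 - p) * (1 - 1 / (8 * a\<^sup>2) - coherent_overlap a 1)
      + ((coherent_amp a 0)\<^sup>2 * ((2 * (1 - p) + p * a)\<^sup>2 + p\<^sup>2)
         - (cmod (tr_adj_mult V (kraus V (coherent a) 0)))\<^sup>2) / 4"
proof -
  have "coherent_amp a 1 = a * coherent_amp a 0"
    using coherent_amp_Suc[of a 0] by simp
  then show ?thesis
    using assms(2) unfolding choi_infidelity_coherent[OF assms(1)] p_def[symmetric]
    by (simp add: field_simps power2_eq_square)
qed

lemma coherent_boundary_term_bound:
  assumes "qubit_unitary V" and "a \<ge> 0"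
  defines "p \<equiv> (cmod (V 0 1))\<^sup>2"
  shows "\<bar>(coherent_amp a 0)\<^sup>2 * ((2 * (1 - p) + p * a)\<^sup>2 + p\<^sup>2)
           - (cmod (tr_adj_mult V (kraus V (coherent a) 0)))\<^sup>2\<bar> \<le> exp (-(a\<^sup>2)) * ((2 + a)\<^sup>2 + 1)"
proof -
  have p: "0 \<le> p" "p \<le> 1"
    using qubit_unitary_norm_01_le_1[OF assms(1)] by (simp_all add: p_def)
  have c0: "(coherent_amp a 0)\<^sup>2 = exp (-(a\<^sup>2))"
    by (simp add: coherent_amp_sq poisson_weight_0)
  have pa: "p * a \<le> a"
    using p assms(2) by (simp add: mult_left_le_one_le)
  then have "0 \<le> 2 * (1 - p) + p * a" "2 * (1 - p) + p * a \<le> 2 + a"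
    using p assms(2) by simp_all
  then have "(2 * (1 - p) + p * a)\<^sup>2 + p\<^sup>2 \<le> (2 + a)\<^sup>2 + 1"
    using p pa assms(2) by (intro add_mono power_mono) (auto simp: power_le_one)
  then have main: "0 \<le> (coherent_amp a 0)\<^sup>2 * ((2 * (1 - p) + p * a)\<^sup>2 + p\<^sup>2)"
    "(coherent_amp a 0)\<^sup>2 * ((2 * (1 - p) + p * a)\<^sup>2 + p\<^sup>2) \<le> exp (-(a\<^sup>2)) * ((2 + a)\<^sup>2 + 1)"
    unfolding c0 by (simp_all add: mult_left_mono)
  have "(cmod (tr_adj_mult V (kraus V (coherent a) 0)))\<^sup>2 \<le> ((2 + a) * coherent_amp a 0)\<^sup>2"
    by (intro power_mono norm_tr_adj_mult_kraus_coherent_0 assms) simp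
  also have "\<dots> = exp (-(a\<^sup>2)) * (2 + a)\<^sup>2"
    by (simp only: power_mult_distrib c0 mult.commute)
  also have "\<dots> \<le> exp (-(a\<^sup>2)) * ((2 + a)\<^sup>2 + 1)"
    by simp
  finally show ?thesis
    using main zero_le_power2[of "cmod (tr_adj_mult V (kraus V (coherent a) 0))"]
    by (intro abs_leI) linarith+
qed

lemma choi_infidelity_coherent_error_bound:
  assumes "qubit_unitary V" and "a \<ge> 1"
  shows "\<bar>choi_infidelity V (coherent a) - (cmod (V 0 1))\<^sup>2 / (4 * a\<^sup>2)\<bar>
           \<le> 3 / a ^ 4 + exp (-(a\<^sup>2)) * (1 + (2 + a)\<^sup>2)"
proof -
  define p where "p = (cmod (V 0 1))\<^sup>2"
  define e1 where "e1 = 1 - 1 / (8 * a\<^sup>2) - coherent_overlap a 1"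
  define e2 where "e2 = 1 - 1 / (2 * a\<^sup>2) - coherent_overlap a 2"
  define B where "B = (coherent_amp a 0)\<^sup>2 * ((2 * (1 - p) + p * a)\<^sup>2 + p\<^sup>2)
                      - (cmod (tr_adj_mult V (kraus V (coherent a) 0)))\<^sup>2"
  define q where "q = 1 / a ^ 4"
  define E where "E = exp (-(a\<^sup>2))"
  define F where "F = E * (1 + (2 + a)\<^sup>2)"
  have p: "0 \<le> p" "p \<le> 1"
    using qubit_unitary_norm_01_le_1[OF assms(1)] by (simp_all add: p_def)
  have e2_term: "\<bar>p\<^sup>2 / 2 * e2\<bar> \<le> (3 * q + E) / 2"
  proof -
    have "p\<^sup>2 * \<bar>e2\<bar> \<le> \<bar>e2\<bar>"
      using p by (intro mult_left_le_one_le) (simp_all add: power_le_one)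
    then show ?thesis
      using coherent_overlap_2_approx[OF assms(2)]
      by (simp add: e2_def q_def E_def abs_mult abs_minus_commute)
  qed
  have e1_term: "\<bar>2 * p * (1 - p) * e1\<bar> \<le> q"
  proof -
    have "2 * p * (1 - p) \<le> 1 / 2"
      using sum_squares_bound[of p "1 - p"] by (simp add: power2_eq_square algebra_simps)
    then have "\<bar>2 * p * (1 - p) * e1\<bar> \<le> 1 / 2 * (2 / a ^ 4)"
      using coherent_overlap_1_approx[OF assms(2)] p
      by (simp only: abs_mult e1_def abs_minus_commute) (intro mult_mono; simp)
    then show ?thesis by (simp add: q_def)
  qed
  have B_term: "\<bar>B / 4\<bar> \<le> F / 4"
    using coherent_boundary_term_bound[OF assms(1)] assms(2)
    by (simp add: B_def p_def E_def F_def add.commute)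
  have "\<bar>p\<^sup>2 / 2 * e2 + 2 * p * (1 - p) * e1 + B / 4\<bar> \<le> (3 * q + E) / 2 + q + F / 4"
    by (rule order_trans[OF abs_triangle_ineq add_mono[OF order_trans[OF abs_triangle_ineq
          add_mono[OF e2_term e1_term]] B_term]])
  also have "\<dots> \<le> 3 * q + F"
  proof -
    have "0 \<le> E" "E \<le> F" "0 \<le> q"
      by (simp_all add: E_def F_def q_def)
    then show ?thesis by (simp add: field_simps)
  qed
  finally show ?thesis
    using choi_infidelity_coherent_expansion[OF assms(1), of a] assms(2)
    by (simp add: p_def e1_def e2_def B_def q_def F_def E_def)
qed

lemma mean_energy_coherent:
  assumes "\<omega> \<ge> 0"
  shows "mean_energy \<omega> (coherent a) = \<omega> * a\<^sup>2"
proof -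
  have "(\<lambda>n. \<omega> * real n * (cmod (coherent a n))\<^sup>2) sums (\<omega> * a\<^sup>2)"
    using sums_mult[OF poisson_moment_1[of "a\<^sup>2"], of \<omega>]
    by (rule sums_ext) (simp_all add: coherent_eq_coherent_amp coherent_amp_sq mult_ac)
  then have "((\<lambda>n. \<omega> * real n * (cmod (coherent a n))\<^sup>2) has_sum (\<omega> * a\<^sup>2)) UNIV"
    by (rule sums_nonneg_imp_has_sum) (use assms in simp)
  then show ?thesis
    unfolding mean_energy_def by (rule infsumI)
qed

theorem mainTheorem9:
  fixes V :: "nat \<Rightarrow> nat \<Rightarrow> complex" and \<omega> :: real
  assumes "qubit_unitary V" and "\<omega> > 0"
  shows "(\<forall>\<alpha>>0. mean_energy \<omega> (coherent \<alpha>) = \<omega> * \<alpha>\<^sup>2)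
    \<and> (\<lambda>\<alpha>. choi_infidelity V (coherent \<alpha>) - (cmod (V 0 1))\<^sup>2 / (4 * \<alpha>\<^sup>2))
        \<in> o[at_top](\<lambda>\<alpha>. 1 / \<alpha>\<^sup>2)
    \<and> (\<lambda>\<alpha>. choi_infidelity V (coherent \<alpha>)
              - \<omega> * (cmod (V 0 1))\<^sup>2 / (4 * mean_energy \<omega> (coherent \<alpha>)))
        \<in> o[at_top](\<lambda>\<alpha>. 1 / mean_energy \<omega> (coherent \<alpha>))"
proof -
  define err where "err \<alpha> = choi_infidelity V (coherent \<alpha>) - (cmod (V 0 1))\<^sup>2 / (4 * \<alpha>\<^sup>2)" for \<alpha>
  have energy: "mean_energy \<omega> (coherent \<alpha>) = \<omega> * \<alpha>\<^sup>2" for \<alpha>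
    using assms(2) by (simp add: mean_energy_coherent)
  have "err \<in> O[at_top](\<lambda>\<alpha>. 3 / \<alpha> ^ 4 + exp (-(\<alpha>\<^sup>2)) * (1 + (2 + \<alpha>)\<^sup>2))"
    using choi_infidelity_coherent_error_bound[OF assms(1)]
    by (intro bigoI[where c = 1] eventually_mono[OF eventually_ge_at_top[of 1]]) (simp add: err_def)
  also have "(\<lambda>\<alpha>::real. 3 / \<alpha> ^ 4 + exp (-(\<alpha>\<^sup>2)) * (1 + (2 + \<alpha>)\<^sup>2)) \<in> o[at_top](\<lambda>\<alpha>. 1 / \<alpha>\<^sup>2)"
    by real_asymp
  finally have err_small: "err \<in> o[at_top](\<lambda>\<alpha>. 1 / \<alpha>\<^sup>2)" .
  have "(\<lambda>\<alpha>. 1 / mean_energy \<omega> (coherent \<alpha>)) = (\<lambda>\<alpha>. inverse \<omega> * (1 / \<alpha>\<^sup>2))"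
    by (simp add: energy divide_inverse inverse_mult_distrib)
  then have energy_scale:
    "o[at_top](\<lambda>\<alpha>. 1 / mean_energy \<omega> (coherent \<alpha>)) = o[at_top](\<lambda>\<alpha>::real. 1 / \<alpha>\<^sup>2)"
    using assms(2) landau_o.small.cmult[of "inverse \<omega>" at_top "\<lambda>\<alpha>::real. 1 / \<alpha>\<^sup>2"] by simp
  have "(\<lambda>\<alpha>. choi_infidelity V (coherent \<alpha>)
      - \<omega> * (cmod (V 0 1))\<^sup>2 / (4 * mean_energy \<omega> (coherent \<alpha>))) = err"
    using assms(2) by (simp add: energy err_def[abs_def])
  then show ?thesis
    unfolding energy_scale using energy err_small by (simp add: err_def[abs_def])
qed

end
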